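(* Let $\mathbb F_0$ be a field and $\mathbb F=\mathbb F_0(\omega)$ a degree-$2$ extension field of $\mathbb F_0$. Let $h,d,n$ be nonnegative integers with $h\le d$, and let $A,B\in \mathbb F_0^{d\times n}$ be matrices with $\mathrm{rank}(A+\omega B)=d$. If $\mathrm{rank}\binom{A}{B}=2d-h$, then there is a matrix $Q\in \mathbb F^{h\times d}$ of rank $h$ such that $Q(A+\omega B)$ has all its entries in $\mathbb F_0$.
   Context: $\binom{A}{B}$ denotes the $2d\times n$ matrix obtained by stacking $A$ above $B$. *)

theory Defs
  imports "Jordan_Normal_Form.DL_Rank"
begin

definition is_subfield :: "'a::field set \<Rightarrow> bool" where
  "is_subfield K \<longleftrightarrow> 0 \<in> K \<and> 1 \<in> K \<and>
     (\<forall>x\<in>K. \<forall>y\<in>K. x + y \<in> K \<and> x * y \<in> K) \<and>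
     (\<forall>x\<in>K. - x \<in> K) \<and> (\<forall>x\<in>K. x \<noteq> 0 \<longrightarrow> inverse x \<in> K)"

text \<open>The simple extension K(w) when w is algebraic of degree 2 over K:
  its elements are a + b w with a, b in K.\<close>
definition quad_ext :: "'a::field set \<Rightarrow> 'a \<Rightarrow> 'a set" where
  "quad_ext K w = {a + b * w | a b. a \<in> K \<and> b \<in> K}"

definition degree2_generator :: "'a::field set \<Rightarrow> 'a \<Rightarrow> bool" where
  "degree2_generator K w \<longleftrightarrow> w \<notin> K \<and> (\<exists>p\<in>K. \<exists>q\<in>K. w ^ 2 = p + q * w)"

definition mat_over :: "'a set \<Rightarrow> 'a mat \<Rightarrow> bool" where
  "mat_over S M \<longleftrightarrow> (\<forall>i < dim_row M. \<forall>j < dim_col M. M $$ (i, j) \<in> S)"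

end

theory Submission
  imports Defs
begin

text \<open>Row reduction over \<open>F\<^sub>0\<close> of the stacked matrix \<open>A\<close> over \<open>B\<close>, whose rank is \<open>2d - h\<close>, yields
  \<open>F\<^sub>0\<close>-matrices \<open>U, V\<close> with \<open>h\<close> rows, \<open>U A + V B = 0\<close>, and the rows of \<open>(U | V)\<close> linearly
  independent. Write \<open>\<omega>\<^sup>2 = p + q \<omega>\<close> and put \<open>Q = V + (\<omega> - q) U\<close>. As \<open>\<omega> (\<omega> - q) = p\<close>,
  \<open>Q (A + \<omega> B) = V A + q V B + p U B + (\<omega> - q) (U A + V B) = V A + q V B + p U B\<close>
  has entries in \<open>F\<^sub>0\<close>. If an \<open>F\<^sub>0\<close>-combination of the rows of this product vanishes, then so does
  the same combination of the rows of \<open>Q\<close>, because \<open>A + \<omega> B\<close> has full row rank; its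
  \<open>F\<^sub>0\<close>-part and \<open>\<omega>\<close>-part are the corresponding combinations of the rows of \<open>V - q U\<close> and \<open>U\<close>,
  so the combination is trivial. Splitting coefficients from \<open>F = F\<^sub>0 + F\<^sub>0 \<omega>\<close> into two
  \<open>F\<^sub>0\<close>-parts extends this to \<open>F\<close>-combinations, whence \<open>Q\<close> has rank \<open>h\<close>.\<close>

lemma subfield_zero: "is_subfield K \<Longrightarrow> 0 \<in> K"
  and subfield_one: "is_subfield K \<Longrightarrow> 1 \<in> K"
  and subfield_add: "is_subfield K \<Longrightarrow> x \<in> K \<Longrightarrow> y \<in> K \<Longrightarrow> x + y \<in> K"
  and subfield_mult: "is_subfield K \<Longrightarrow> x \<in> K \<Longrightarrow> y \<in> K \<Longrightarrow> x * y \<in> K"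
  and subfield_uminus: "is_subfield K \<Longrightarrow> x \<in> K \<Longrightarrow> - x \<in> K"
  unfolding is_subfield_def by auto

lemma subfield_inverse: "is_subfield K \<Longrightarrow> x \<in> K \<Longrightarrow> inverse x \<in> K"
  unfolding is_subfield_def by (cases "x = 0") auto

lemma subfield_diff: "is_subfield K \<Longrightarrow> x \<in> K \<Longrightarrow> y \<in> K \<Longrightarrow> x - y \<in> K"
  using subfield_add subfield_uminus by (metis diff_conv_add_uminus)

lemma subfield_sum: "is_subfield K \<Longrightarrow> (\<And>i. i \<in> S \<Longrightarrow> f i \<in> K) \<Longrightarrow> sum f S \<in> K"
  by (induction S rule: infinite_finite_induct) (auto intro: subfield_zero subfield_add)

lemma subfield_coords_eq_0:
  assumes K: "is_subfield K" and w: "\<omega> \<notin> K" and x: "x \<in> K" and y: "y \<in> K"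
    and eq: "x + y * \<omega> = 0"
  shows "x = 0 \<and> y = 0"
proof (cases "y = 0")
  case True
  then show ?thesis using eq by simp
next
  case False
  then have "\<omega> = - x * inverse y" using eq by (simp add: field_simps eq_neg_iff_add_eq_0)
  then have "\<omega> \<in> K" using subfield_mult[OF K subfield_uminus[OF K x] subfield_inverse[OF K y]] by simp
  with w show ?thesis by simp
qed

lemma quad_ext_memI: "a \<in> K \<Longrightarrow> b \<in> K \<Longrightarrow> a + b * \<omega> \<in> quad_ext K \<omega>"
  unfolding quad_ext_def by auto

lemma is_subfield_quad_ext:
  assumes K: "is_subfield K" and g: "degree2_generator K \<omega>"
  shows "is_subfield (quad_ext K \<omega>)"
proof -
  from g obtain p q where w: "\<omega> \<notin> K" and p: "p \<in> K" and q: "q \<in> K" and wq: "\<omega>^2 = p + q * \<omega>"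
    unfolding degree2_generator_def by auto
  note sf = subfield_zero[OF K] subfield_one[OF K] subfield_add[OF K] subfield_mult[OF K]
    subfield_uminus[OF K] subfield_inverse[OF K] subfield_diff[OF K]
  have closed: "x + y \<in> quad_ext K \<omega> \<and> x * y \<in> quad_ext K \<omega>"
    if "x \<in> quad_ext K \<omega>" "y \<in> quad_ext K \<omega>" for x y
  proof -
    from that obtain a b c d where ab: "a \<in> K" "b \<in> K" "c \<in> K" "d \<in> K"
      and x: "x = a + b * \<omega>" and y: "y = c + d * \<omega>" unfolding quad_ext_def by auto
    have "x + y = (a + c) + (b + d) * \<omega>" unfolding x y by (simp add: algebra_simps)
    moreover have "x * y = a * c + (a * d + b * c) * \<omega> + b * d * \<omega>^2"
      unfolding x y by (simp add: algebra_simps power2_eq_square)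
    then have "x * y = (a * c + b * d * p) + (a * d + b * c + b * d * q) * \<omega>"
      unfolding wq by (simp add: algebra_simps)
    ultimately show ?thesis using ab p q sf by (simp add: quad_ext_memI)
  qed
  have inverse: "inverse x \<in> quad_ext K \<omega>" if "x \<in> quad_ext K \<omega>" "x \<noteq> 0" for x
  proof -
    from that obtain a b where ab: "a \<in> K" "b \<in> K" and x: "x = a + b * \<omega>"
      unfolding quad_ext_def by auto
    define c where "c = a + b * q"
    define N where "N = a * c - b * b * p"
    have cK: "c \<in> K" and NK: "N \<in> K" unfolding N_def c_def using ab p q sf by simp_all
    have "x * (c + (- b) * \<omega>) = a * c + (b * c - a * b) * \<omega> - b * b * \<omega>^2"
      unfolding x by (simp add: algebra_simps power2_eq_square)
    then have norm: "x * (c + (- b) * \<omega>) = N"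
      unfolding wq N_def c_def by (simp add: algebra_simps)
    have "N \<noteq> 0"
    proof
      assume "N = 0"
      then have "c + (- b) * \<omega> = 0" using norm that(2) by simp
      then have "c = 0 \<and> - b = 0" using subfield_coords_eq_0[OF K w cK sf(5)[OF ab(2)]] by blast
      then show False using that(2) x unfolding c_def by auto
    qed
    then have "inverse x = c * inverse N + (- b * inverse N) * \<omega>"
      using norm that(2) by (simp add: field_simps)
    moreover have "c * inverse N \<in> K" "- b * inverse N \<in> K" using sf ab cK NK by auto
    ultimately show ?thesis by (metis quad_ext_memI)
  qed
  have "0 \<in> quad_ext K \<omega>" "1 \<in> quad_ext K \<omega>"
    using quad_ext_memI[of 0 K 0 \<omega>] quad_ext_memI[of 1 K 0 \<omega>] sf by simp_all
  moreover have "- x \<in> quad_ext K \<omega>" if "x \<in> quad_ext K \<omega>" for x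
  proof -
    from that obtain a b where ab: "a \<in> K" "b \<in> K" and x: "x = a + b * \<omega>"
      unfolding quad_ext_def by auto
    have "- x = (- a) + (- b) * \<omega>" unfolding x by simp
    then show ?thesis using quad_ext_memI sf(5) ab by metis
  qed
  ultimately show ?thesis using closed inverse unfolding is_subfield_def by blast
qed

lemma mat_over_mult:
  assumes K: "is_subfield K" and "X \<in> carrier_mat m l" and "Y \<in> carrier_mat l n"
    and "mat_over K X" and "mat_over K Y"
  shows "mat_over K (X * Y)"
  using assms unfolding mat_over_def
  by (auto simp: scalar_prod_def intro!: subfield_sum[OF K] subfield_mult[OF K])

lemma gauss_jordan_main_mat_over:
  assumes K: "is_subfield K"
  shows "mat_over K A \<Longrightarrow> mat_over K B \<Longrightarrow> dim_row B = dim_row A \<Longrightarrow>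
    gauss_jordan_main A B i j = (A', B') \<Longrightarrow> mat_over K A' \<and> mat_over K B'"
proof (induction A B i j rule: gauss_jordan_main.induct)
  case (1 A B i j)
  note IH = "1.IH"
  note prems = "1.prems"
  show ?case
  proof (cases "i < dim_row A \<and> j < dim_col A")
    case False
    then have "gauss_jordan_main A B i j = (A,B)" by (subst gauss_jordan_main.simps, auto)
    then show ?thesis using prems by simp
  next
    case ij: True
    show ?thesis
    proof (cases "A $$ (i,j) = 0")
      case zero: True
      show ?thesis
      proof (cases "[ i' . i' <- [Suc i ..< dim_row A],  A $$ (i',j) \<noteq> 0]")
        case Nil
        have "gauss_jordan_main A B i j = gauss_jordan_main A B i (Suc j)"
          by (subst gauss_jordan_main.simps, unfold Let_def, simp only: ij zero Nil if_True list.case simp_thms)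
        then show ?thesis using prems IH(1)[OF refl refl ij refl zero Nil] by simp
      next
        case (Cons i' rest)
        have "i' \<in> set [ i' . i' <- [Suc i ..< dim_row A],  A $$ (i',j) \<noteq> 0]" unfolding Cons by simp
        then have i': "i' < dim_row A" by auto
        have "mat_over K (swaprows i i' A)" "mat_over K (swaprows i i' B)"
          using prems(1,2,3) ij i' unfolding mat_over_def mat_swaprows_def by auto
        then show ?thesis using prems ij zero IH(2)[OF refl refl ij refl zero Cons]
          by (simp add: Let_def gauss_jordan_main.simps[of A B i j] Cons mat_swaprows_def)
      qed
    next
      case nonzero: False
      show ?thesis
      proof (cases "A $$ (i,j) = 1")
        case one: True
        let ?v = "\<lambda> i. A $$ (i,j)"
        have "mat_over K (eliminate_entries ?v A i j)" "mat_over K (eliminate_entries ?v B i j)"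
          using prems(1,2,3) ij unfolding mat_over_def eliminate_entries_gen_def
          by (auto intro!: subfield_diff[OF K] subfield_mult[OF K])
        then show ?thesis using prems ij one IH(3)[OF refl refl ij refl nonzero one refl]
          by (simp add: Let_def gauss_jordan_main.simps[of A B i j] eliminate_entries_gen_def)
      next
        case not_one: False
        let ?iv = "inverse (A $$ (i,j))"
        have iv: "?iv \<in> K" using prems(1) ij subfield_inverse[OF K] unfolding mat_over_def by auto
        have "mat_over K (multrow i ?iv A)" "mat_over K (multrow i ?iv B)"
          using prems(1,2,3) ij iv unfolding mat_over_def mat_multrow_gen_def
          by (auto intro!: subfield_mult[OF K])
        then show ?thesis using prems ij not_one nonzero IH(4)[OF refl refl ij refl nonzero not_one refl]
          by (simp add: Let_def gauss_jordan_main.simps[of A B i j] mat_multrow_gen_def)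
      qed
    qed
  qed
qed

lemma row_echelon_transform_over_subfield:
  assumes K: "is_subfield K" and X: "X \<in> carrier_mat m n" and XK: "mat_over K X"
  obtains P Pv f where "P \<in> carrier_mat m m" "Pv \<in> carrier_mat m m" "P * Pv = 1\<^sub>m m"
    "Pv * P = 1\<^sub>m m" "mat_over K P" "pivot_fun (P * X) f n"
proof -
  obtain R P' where gj: "gauss_jordan X (1\<^sub>m m) = (R, P')" by (cases "gauss_jordan X (1\<^sub>m m)", auto)
  from gauss_jordan_transform[OF X one_carrier_mat gj, of "()"]
  obtain U where U: "U \<in> Units (ring_mat TYPE('a) m ())" and R: "R = U * X" and P': "P' = U * 1\<^sub>m m"
    by auto
  from U obtain V where UV: "U \<in> carrier_mat m m" "V \<in> carrier_mat m m" "U * V = 1\<^sub>m m" "V * U = 1\<^sub>m m"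
    unfolding Units_def ring_mat_def by auto
  have P'U: "P' = U" using P' UV by simp
  have "mat_over K (1\<^sub>m m)" unfolding mat_over_def using subfield_zero[OF K] subfield_one[OF K] by auto
  then have "mat_over K P'" using gauss_jordan_main_mat_over[OF K XK _ _ gj[unfolded gauss_jordan_def]] X by auto
  moreover have "row_echelon_form R" by (rule gauss_jordan_row_echelon[OF X gj])
  then obtain f where "pivot_fun R f n" unfolding row_echelon_form_def using R X UV by auto
  ultimately show ?thesis using that[of U V f] UV P'U R by auto
qed

lemma rank_le_dim_row:
  assumes X: "X \<in> carrier_mat m nc"
  shows "vec_space.rank m X \<le> m"
proof -
  interpret vec_space "TYPE('a::field)" m .
  have cs: "set (cols X) \<subseteq> carrier_vec m" using X by (auto simp: cols_def)
  have "subspace class_ring (span (set (cols X))) V" by (rule span_is_subspace[OF cs])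
  from subspace_dim[OF this fin_dim fin_dim_span_cols[OF X]]
  show ?thesis unfolding rank_def dim_is_n .
qed

lemma invertible_cols_lin_indpt:
  assumes Pv: "Pv \<in> carrier_mat m m" and P: "P \<in> carrier_mat m m" and PvP: "Pv * P = 1\<^sub>m m"
  shows "distinct (cols Pv)" "LinearCombinations.module.lin_indpt class_ring (module_vec TYPE('a::field) m) (set (cols Pv))"
proof -
  interpret vec_space "TYPE('a::field)" m .
  have "det Pv * det P = 1" using det_mult[OF Pv P] PvP by simp
  then have "det Pv \<noteq> 0" by auto
  then have r: "rank Pv = m" using low_rank_det_zero[OF Pv] by auto
  then show d: "distinct (cols Pv)" using non_distinct_low_rank[OF Pv] by auto
  show "lin_indpt (set (cols Pv))" by (rule full_rank_lin_indpt[OF Pv r d])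
qed

lemma card_pivot_rows_le_rank:
  assumes X: "X \<in> carrier_mat m n" and P: "P \<in> carrier_mat m m" and Pv: "Pv \<in> carrier_mat m m"
    and PvP: "Pv * P = 1\<^sub>m m" and piv: "pivot_fun (P * X) f n"
  shows "card {i. i < m \<and> f i < n} \<le> vec_space.rank m X"
proof -
  interpret vec_space "TYPE('a::field)" m .
  let ?S = "{i. i < m \<and> f i < n}"
  have PX: "P * X \<in> carrier_mat m n" using P X by auto
  have XX: "Pv * (P * X) = X" using assoc_mult_mat[OF Pv P X] PvP X by simp
  have colX: "col X (f i) = col Pv i" if i: "i \<in> ?S" for i
  proof -
    have dr: "dim_row (P * X) = m" using PX by auto
    have e1: "(P * X) $$ (i, f i) = 1" using pivot_funD(4)[OF dr piv, of i] i by auto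
    have e2: "(P * X) $$ (i', f i) = 0" if "i' < m" "i' \<noteq> i" for i'
      using pivot_funD(5)[OF dr piv, of i i'] i that by auto
    have "col (P * X) (f i) = unit_vec m i"
      using e1 e2 i PX dr by (intro eq_vecI, auto simp: unit_vec_def)
    then have "col X (f i) = Pv *\<^sub>v unit_vec m i" using col_mult2[OF Pv PX, of "f i"] i XX by simp
    also have "\<dots> = col (Pv * 1\<^sub>m m) i" using col_mult2[OF Pv one_carrier_mat, of i] i by simp
    finally show ?thesis using Pv by simp
  qed
  have sub: "col Pv ` ?S \<subseteq> set (cols X)"
  proof
    fix v assume "v \<in> col Pv ` ?S"
    then obtain i where i: "i \<in> ?S" and v: "v = col Pv i" by auto
    have "col X (f i) \<in> set (cols X)" using i X unfolding cols_def by auto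
    then show "v \<in> set (cols X)" using colX[OF i] v by simp
  qed
  have sub2: "col Pv ` ?S \<subseteq> set (cols Pv)" using Pv unfolding cols_def by auto
  have li: "lin_indpt (col Pv ` ?S)"
    using subset_li_is_li[OF invertible_cols_lin_indpt(2)[OF Pv P PvP] sub2] .
  have "inj_on (col Pv) ?S"
  proof
    fix i j assume "i \<in> ?S" "j \<in> ?S" "col Pv i = col Pv j"
    then show "i = j" using invertible_cols_lin_indpt(1)[OF Pv P PvP] Pv
      unfolding cols_def by (auto simp: distinct_conv_nth)
  qed
  then have "card (col Pv ` ?S) = card ?S" by (rule card_image)
  with rank_ge_card_indpt[OF X sub li] show ?thesis by simp
qed

definition row_comb :: "(nat \<Rightarrow> 'a::comm_ring_1) \<Rightarrow> 'a mat \<Rightarrow> nat \<Rightarrow> 'a" where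
  "row_comb c X j = (\<Sum>i=0..<dim_row X. c i * X $$ (i, j))"

definition rows_indpt_over :: "'a::comm_ring_1 set \<Rightarrow> 'a mat \<Rightarrow> bool" where
  "rows_indpt_over S X \<longleftrightarrow> (\<forall>c. (\<forall>i<dim_row X. c i \<in> S) \<longrightarrow>
     (\<forall>j<dim_col X. row_comb c X j = 0) \<longrightarrow> (\<forall>i<dim_row X. c i = 0))"

lemma rows_indpt_overD:
  "rows_indpt_over S X \<Longrightarrow> (\<And>i. i < dim_row X \<Longrightarrow> c i \<in> S) \<Longrightarrow>
    (\<And>j. j < dim_col X \<Longrightarrow> row_comb c X j = 0) \<Longrightarrow> i < dim_row X \<Longrightarrow> c i = 0"
  unfolding rows_indpt_over_def by blast

lemma index_mult_mat_row_comb: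
  assumes "X \<in> carrier_mat m l" "Y \<in> carrier_mat l n" "i < m" "j < n"
  shows "(X * Y) $$ (i, j) = row_comb (\<lambda>k. X $$ (i, k)) Y j"
  using assms unfolding row_comb_def by (simp add: scalar_prod_def)

lemma row_comb_mult:
  assumes X: "X \<in> carrier_mat m l" and Y: "Y \<in> carrier_mat l n" and j: "j < n"
  shows "row_comb c (X * Y) j = row_comb (row_comb c X) Y j"
proof -
  have "row_comb c (X * Y) j = (\<Sum>i=0..<m. \<Sum>k=0..<l. c i * X $$ (i, k) * Y $$ (k, j))"
    using X Y j unfolding row_comb_def
    by (simp add: scalar_prod_def sum_distrib_left mult.assoc)
  also have "\<dots> = (\<Sum>k=0..<l. \<Sum>i=0..<m. c i * X $$ (i, k) * Y $$ (k, j))"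
    by (rule sum.swap)
  also have "\<dots> = row_comb (row_comb c X) Y j"
    using X Y unfolding row_comb_def by (simp add: sum_distrib_right)
  finally show ?thesis .
qed

lemma row_comb_in_subfield:
  "is_subfield K \<Longrightarrow> mat_over K X \<Longrightarrow> (\<And>i. i < dim_row X \<Longrightarrow> c i \<in> K) \<Longrightarrow> j < dim_col X \<Longrightarrow>
    row_comb c X j \<in> K"
  unfolding row_comb_def mat_over_def by (auto intro!: subfield_sum subfield_mult)

lemma rows_indpt_over_mult_right:
  assumes X: "X \<in> carrier_mat m l" and Y: "Y \<in> carrier_mat l n"
    and indpt: "rows_indpt_over S (X * Y)"
  shows "rows_indpt_over S X"
  unfolding rows_indpt_over_def
proof (intro allI impI)
  fix c i assume S: "\<forall>i<dim_row X. c i \<in> S" and ker: "\<forall>k<dim_col X. row_comb c X k = 0"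
    and i: "i < dim_row X"
  have "row_comb c (X * Y) j = 0" if "j < n" for j
    using row_comb_mult[OF X Y that] ker X Y unfolding row_comb_def by simp
  then show "c i = 0" using rows_indpt_overD[OF indpt, of c] S i X Y by auto
qed



lemma low_rank_zero_rows:
  assumes X: "X \<in> carrier_mat m n" and P: "P \<in> carrier_mat m m" and Pv: "Pv \<in> carrier_mat m m"
    and PvP: "Pv * P = 1\<^sub>m m" and piv: "pivot_fun (P * X) f n"
    and rank: "vec_space.rank m X + h \<le> m"
  obtains g where "inj_on g {0..<h}" "\<And>i. i < h \<Longrightarrow> g i < m"
    "\<And>i j. i < h \<Longrightarrow> j < n \<Longrightarrow> (P * X) $$ (g i, j) = 0"
proof -
  have dr: "dim_row (P * X) = m" using P by simp
  define Pivots where "Pivots = {i. i < m \<and> f i < n}"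
  define Zero_rows where "Zero_rows = {i. i < m \<and> \<not> f i < n}"
  have "card Pivots \<le> m - h"
    using card_pivot_rows_le_rank[OF X P Pv PvP piv] rank unfolding Pivots_def by simp
  moreover have "card Pivots + card Zero_rows = m"
  proof -
    have "Pivots \<union> Zero_rows = {0..<m}" "Pivots \<inter> Zero_rows = {}"
      unfolding Pivots_def Zero_rows_def by auto
    then show ?thesis using card_Un_disjoint[of Pivots Zero_rows] unfolding Pivots_def Zero_rows_def by auto
  qed
  ultimately have h: "h \<le> card Zero_rows" using rank by linarith
  obtain g where g: "bij_betw g {0..<card Zero_rows} Zero_rows"
    using ex_bij_betw_nat_finite[of Zero_rows] unfolding Zero_rows_def by auto
  have g_zero: "g i \<in> Zero_rows" and g_m: "g i < m" if "i < h" for i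
    using g that h unfolding bij_betw_def Zero_rows_def by auto
  have "inj_on g {0..<h}"
    using g h unfolding bij_betw_def by (auto intro: inj_on_subset)
  moreover have "(P * X) $$ (g i, j) = 0" if i: "i < h" and j: "j < n" for i j
  proof -
    have "f (g i) = n" using g_zero[OF i] pivot_funD(1)[OF dr piv, of "g i"] unfolding Zero_rows_def by auto
    then show ?thesis using pivot_funD(2)[OF dr piv, of "g i" j] g_m[OF i] j by auto
  qed
  ultimately show ?thesis using that g_m by blast
qed

lemma low_rank_left_annihilator:
  assumes K: "is_subfield K" and X: "X \<in> carrier_mat m n" and XK: "mat_over K X"
    and rank: "vec_space.rank m X + h \<le> m"
  obtains R where "R \<in> carrier_mat h m" "mat_over K R" "R * X = 0\<^sub>m h n" "rows_indpt_over UNIV R"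
proof -
  obtain P Pv f where P: "P \<in> carrier_mat m m" and Pv: "Pv \<in> carrier_mat m m"
    and PPv: "P * Pv = 1\<^sub>m m" and PvP: "Pv * P = 1\<^sub>m m" and PK: "mat_over K P"
    and piv: "pivot_fun (P * X) f n"
    using row_echelon_transform_over_subfield[OF K X XK] by blast
  obtain g where g_inj: "inj_on g {0..<h}" and g_m: "\<And>i. i < h \<Longrightarrow> g i < m"
    and zero_row: "\<And>i j. i < h \<Longrightarrow> j < n \<Longrightarrow> (P * X) $$ (g i, j) = 0"
    using low_rank_zero_rows[OF X P Pv PvP piv rank] by blast
  have g_eq_iff: "g i = g i' \<longleftrightarrow> i = i'" if "i < h" "i' < h" for i i'
    using inj_on_eq_iff[OF g_inj] that by simp
  define R where "R = mat h m (\<lambda>(i, k). P $$ (g i, k))"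
  have R: "R \<in> carrier_mat h m" unfolding R_def by simp
  have row_R: "row R i = row P (g i)" if "i < h" for i
    using that g_m[OF that] P unfolding R_def by (intro eq_vecI) auto
  have "mat_over K R" using PK P g_m unfolding R_def mat_over_def by auto
  moreover have "R * X = 0\<^sub>m h n"
    using R X P g_m zero_row row_R by (intro eq_matI) auto
  moreover have "rows_indpt_over UNIV R"
    unfolding rows_indpt_over_def
  proof (intro allI impI)
    fix c i0 assume ker: "\<forall>k<dim_col R. row_comb c R k = 0" and "i0 < dim_row R"
    then have i0: "i0 < h" using R by simp
    have "(R * Pv) $$ (i, g i0) = (if i = i0 then 1 else 0)" if i: "i < h" for i
    proof -
      have "(R * Pv) $$ (i, g i0) = (P * Pv) $$ (g i, g i0)"
        using R P Pv i g_m[OF i] g_m[OF i0] row_R[OF i] by simp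
      then show ?thesis using PPv g_m[OF i] g_m[OF i0] g_eq_iff[OF i i0] by simp
    qed
    then have "row_comb c (R * Pv) (g i0) = (\<Sum>i=0..<h. if i = i0 then c i else 0)"
      using R Pv unfolding row_comb_def by (intro sum.cong) auto
    then have "row_comb c (R * Pv) (g i0) = c i0" using i0 by simp
    moreover have "row_comb c (R * Pv) (g i0) = 0"
      using row_comb_mult[OF R Pv g_m[OF i0]] ker R Pv unfolding row_comb_def by simp
    ultimately show "c i0 = 0" by simp
  qed
  ultimately show ?thesis using that R by blast
qed

lemma rank_eq_dim_row_if_rows_indpt_over:
  assumes K: "is_subfield K" and X: "X \<in> carrier_mat m n" and XK: "mat_over K X"
    and indpt: "rows_indpt_over K X"
  shows "vec_space.rank m X = m"
proof (rule ccontr)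
  assume "vec_space.rank m X \<noteq> m"
  then have "vec_space.rank m X + 1 \<le> m" using rank_le_dim_row[OF X] by simp
  then obtain R where R: "R \<in> carrier_mat 1 m" and RK: "mat_over K R" and RX: "R * X = 0\<^sub>m 1 n"
    and R_indpt: "rows_indpt_over UNIV R"
    using low_rank_left_annihilator[OF K X XK] by blast
  have R_zero: "R $$ (0, k) = 0" if "k < m" for k
  proof (rule rows_indpt_overD[OF indpt])
    show "R $$ (0, i) \<in> K" if "i < dim_row X" for i
      using RK R X that unfolding mat_over_def by auto
    show "row_comb (\<lambda>i. R $$ (0, i)) X j = 0" if "j < dim_col X" for j
      using index_mult_mat_row_comb[OF R X, of 0 j] RX X that by simp
  qed (use that X in simp)
  have "row_comb (\<lambda>_. 1) R k = 0" if "k < dim_col R" for k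
    using R_zero R that unfolding row_comb_def by simp
  then have "(1::'a) = 0" using rows_indpt_overD[OF R_indpt, of "\<lambda>_. 1" 0] R by auto
  then show False by simp
qed

lemma full_rank_invertible_col_submatrix:
  fixes M :: "'a::field mat"
  assumes M: "M \<in> carrier_mat d n" and r: "vec_space.rank d M = d"
  obtains N where "N \<in> carrier_mat d d" "det N \<noteq> 0" "\<And>i. i < d \<Longrightarrow> \<exists>l<n. col N i = col M l"
proof -
  interpret vec_space "TYPE('a)" d .
  obtain S where S_max: "maximal S (\<lambda>T. T \<subseteq> set (cols M) \<and> lin_indpt T)"
    using maximal_exists[of "(\<lambda>T. T \<subseteq> set (cols M) \<and> lin_indpt T)" "card (set (cols M))" "{}"]
    by (meson List.finite_set card_mono empty_iff empty_subsetI finite_lin_indpt2 rev_finite_subset)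
  have cardS: "card S = d" using rank_card_indpt[OF M S_max] r by simp
  have SM: "S \<subseteq> set (cols M)" and liS: "lin_indpt S" using S_max unfolding maximal_def by auto
  have finS: "finite S" using SM finite_subset by blast
  obtain ss where ss: "distinct ss" "set ss = S" using finite_distinct_list[OF finS] by blast
  have len: "length ss = d" using ss cardS distinct_card by fastforce
  have ssc: "set ss \<subseteq> carrier_vec d" using ss SM M by (auto simp: cols_def)
  define N where "N = mat_of_cols d ss"
  have N: "N \<in> carrier_mat d d" unfolding N_def using len by auto
  have cN: "cols N = ss" unfolding N_def using ssc by simp
  have "rank N = d" by (rule lin_indpt_full_rank[OF N], insert cN ss liS, auto)
  then have "det N \<noteq> 0" using det_rank_iff[OF N] by simp
  moreover have "\<exists>l<n. col N i = col M l" if i: "i < d" for i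
  proof -
    have "ss ! i \<in> set (cols M)" using ss SM i len by auto
    then obtain l where "l < n" and "ss ! i = col M l" using M unfolding cols_def by auto
    moreover have "col N i = ss ! i" using cN i N by (metis cols_length cols_nth carrier_matD(2))
    ultimately show ?thesis by auto
  qed
  ultimately show ?thesis using that N by blast
qed

lemma rows_indpt_if_rank_eq_dim_row:
  fixes M :: "'a::field mat"
  assumes M: "M \<in> carrier_mat d n" and r: "vec_space.rank d M = d"
  shows "rows_indpt_over UNIV M"
  unfolding rows_indpt_over_def
proof (intro allI impI)
  fix w k assume "\<forall>i<dim_row M. w i \<in> UNIV" and ker: "\<forall>l<dim_col M. row_comb w M l = 0"
    and "k < dim_row M"
  then have k: "k < d" using M by simp
  obtain N where N: "N \<in> carrier_mat d d" and det: "det N \<noteq> 0"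
    and cols_N: "\<And>i. i < d \<Longrightarrow> \<exists>l<n. col N i = col M l"
    using full_rank_invertible_col_submatrix[OF M r] by blast
  define v where "v = vec d w"
  have v: "v \<in> carrier_vec d" unfolding v_def by simp
  have "transpose_mat N *\<^sub>v v = 0\<^sub>v d"
  proof (rule eq_vecI)
    fix i assume "i < dim_vec (0\<^sub>v d :: 'a vec)"
    then have i: "i < d" by simp
    then obtain l where l: "l < n" and col: "col N i = col M l" using cols_N by blast
    have "(transpose_mat N *\<^sub>v v) $ i = col M l \<bullet> v" using i N col by simp
    also have "\<dots> = row_comb w M l"
      unfolding v_def scalar_prod_def row_comb_def using M l by (auto intro: sum.cong simp: mult.commute)
    also have "\<dots> = 0" using ker l M by simp
    finally show "(transpose_mat N *\<^sub>v v) $ i = 0\<^sub>v d $ i" using i by simp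
  qed (use N in auto)
  moreover have "det (transpose_mat N) \<noteq> 0" using det det_transpose[OF N] by simp
  ultimately have "v = 0\<^sub>v d" using det_0_iff_vec_prod_zero_field[of "transpose_mat N" d] N v by auto
  then show "w k = 0" using k unfolding v_def by (metis index_vec index_zero_vec(1))
qed

lemma rows_indpt_over_quad_ext:
  assumes K: "is_subfield K" and w: "\<omega> \<notin> K" and ZK: "mat_over K Z"
    and indpt: "rows_indpt_over K Z"
  shows "rows_indpt_over (quad_ext K \<omega>) Z"
  unfolding rows_indpt_over_def
proof (intro allI impI)
  fix c i assume c: "\<forall>i<dim_row Z. c i \<in> quad_ext K \<omega>"
    and ker: "\<forall>j<dim_col Z. row_comb c Z j = 0" and i: "i < dim_row Z"
  have "\<forall>i. \<exists>a b. i < dim_row Z \<longrightarrow> a \<in> K \<and> b \<in> K \<and> c i = a + b * \<omega>"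
    using c unfolding quad_ext_def by blast
  then obtain a b where ab: "\<And>i. i < dim_row Z \<Longrightarrow> a i \<in> K \<and> b i \<in> K \<and> c i = a i + b i * \<omega>"
    by metis
  have "row_comb a Z j = 0 \<and> row_comb b Z j = 0" if j: "j < dim_col Z" for j
  proof (rule subfield_coords_eq_0[OF K w])
    show "row_comb a Z j \<in> K" "row_comb b Z j \<in> K"
      using row_comb_in_subfield[OF K ZK] ab j by auto
    have "row_comb c Z j = (\<Sum>i=0..<dim_row Z. a i * Z $$ (i, j) + b i * Z $$ (i, j) * \<omega>)"
      unfolding row_comb_def using ab by (intro sum.cong) (auto simp: algebra_simps)
    also have "\<dots> = row_comb a Z j + row_comb b Z j * \<omega>"
      unfolding row_comb_def by (simp add: sum.distrib sum_distrib_right)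
    finally show "row_comb a Z j + row_comb b Z j * \<omega> = 0" using ker j by simp
  qed
  then have "a i = 0" "b i = 0"
    using rows_indpt_overD[OF indpt, of a] rows_indpt_overD[OF indpt, of b] ab i by auto
  then show "c i = 0" using ab i by simp
qed


lemma mat_over_append_rows:
  assumes "A \<in> carrier_mat d1 n" "B \<in> carrier_mat d2 n" "mat_over K A" "mat_over K B"
  shows "mat_over K (A @\<^sub>r B)"
  using assms unfolding mat_over_def append_rows_def by auto

lemma left_annihilator_append_rows:
  assumes R: "R \<in> carrier_mat h (d1 + d2)" and A: "A \<in> carrier_mat d1 n" and B: "B \<in> carrier_mat d2 n"
    and RAB: "R * (A @\<^sub>r B) = 0\<^sub>m h n"
  defines "U \<equiv> mat h d1 (\<lambda>(i, k). R $$ (i, k))" and "V \<equiv> mat h d2 (\<lambda>(i, k). R $$ (i, d1 + k))"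
  shows "U * A + V * B = 0\<^sub>m h n"
    and "k < d1 + d2 \<Longrightarrow> row_comb c R k = (if k < d1 then row_comb c U k else row_comb c V (k - d1))"
proof -
  have U: "U \<in> carrier_mat h d1" and V: "V \<in> carrier_mat h d2" unfolding U_def V_def by auto
  have AB_index: "(A @\<^sub>r B) $$ (k, j) = (if k < d1 then A $$ (k, j) else B $$ (k - d1, j))"
    if "k < d1 + d2" "j < n" for k j
    using A B that unfolding append_rows_def by auto
  have "(U * A + V * B) $$ (i, j) = 0" if i: "i < h" and j: "j < n" for i j
  proof -
    have "(U * A) $$ (i, j) = (\<Sum>k=0..<d1. U $$ (i, k) * A $$ (k, j))"
      using U A i j by (simp add: scalar_prod_def)
    also have "\<dots> = (\<Sum>k=0..<d1. R $$ (i, k) * (A @\<^sub>r B) $$ (k, j))"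
      using i j by (intro sum.cong) (simp_all add: U_def AB_index)
    finally have UA: "(U * A) $$ (i, j) = \<dots>" .
    have "(V * B) $$ (i, j) = (\<Sum>k=0..<d2. V $$ (i, k) * B $$ (k, j))"
      using V B i j by (simp add: scalar_prod_def)
    also have "\<dots> = (\<Sum>k=d1..<d1 + d2. R $$ (i, k) * (A @\<^sub>r B) $$ (k, j))"
      using i j sum.shift_bounds_nat_ivl[of "\<lambda>k. R $$ (i, k) * (A @\<^sub>r B) $$ (k, j)" 0 d1 d2]
      by (simp add: V_def AB_index add.commute)
    finally have VB: "(V * B) $$ (i, j) = \<dots>" .
    have "(U * A + V * B) $$ (i, j) = (\<Sum>k=0..<d1 + d2. R $$ (i, k) * (A @\<^sub>r B) $$ (k, j))"
      using U V A B i j by (simp add: UA VB sum.atLeastLessThan_concat)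
    also have "\<dots> = (R * (A @\<^sub>r B)) $$ (i, j)"
      using R carrier_append_rows[OF A B] i j by (simp add: scalar_prod_def)
    finally show ?thesis using RAB i j by simp
  qed
  then show "U * A + V * B = 0\<^sub>m h n"
    using A B U V by (intro eq_matI) auto
  show "row_comb c R k = (if k < d1 then row_comb c U k else row_comb c V (k - d1))" if "k < d1 + d2"
    using R U V that unfolding row_comb_def by (auto simp: U_def V_def intro: sum.cong)
qed

lemma index_quad_combination_mult:
  fixes A B U V :: "'a::field mat"
  assumes w_sq: "\<omega>^2 = p + q * \<omega>"
    and A: "A \<in> carrier_mat d n" and B: "B \<in> carrier_mat d n"
    and U: "U \<in> carrier_mat h d" and V: "V \<in> carrier_mat h d"
    and UV_ker: "U * A + V * B = 0\<^sub>m h n" and i: "i < h" and j: "j < n"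
  shows "((V + (\<omega> - q) \<cdot>\<^sub>m U) * (A + \<omega> \<cdot>\<^sub>m B)) $$ (i, j) =
    (V * A) $$ (i, j) + q * (V * B) $$ (i, j) + p * (U * B) $$ (i, j)"
proof -
  \<comment> \<open>Since \<open>\<omega> (\<omega> - q) = p\<close>, each product splits into a part free of \<open>\<omega>\<close> and a multiple of \<open>\<omega> - q\<close>.\<close>
  have split_mult: "(v + (\<omega> - q) * u) * (a + \<omega> * b) =
      (v * a + q * (v * b) + p * (u * b)) + (\<omega> - q) * (u * a + v * b)" for u v a b
  proof -
    have "(v + (\<omega> - q) * u) * (a + \<omega> * b) - ((v * a + q * (v * b) + p * (u * b)) + (\<omega> - q) * (u * a + v * b))
        = (\<omega>^2 - q * \<omega> - p) * u * b"
      by (simp add: algebra_simps power2_eq_square)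
    then show ?thesis using w_sq by simp
  qed
  let ?F = "\<lambda>k. V $$ (i, k) * A $$ (k, j) + q * (V $$ (i, k) * B $$ (k, j)) + p * (U $$ (i, k) * B $$ (k, j))"
  let ?G = "\<lambda>k. U $$ (i, k) * A $$ (k, j) + V $$ (i, k) * B $$ (k, j)"
  have "((V + (\<omega> - q) \<cdot>\<^sub>m U) * (A + \<omega> \<cdot>\<^sub>m B)) $$ (i, j) =
      (\<Sum>k=0..<d. (V $$ (i, k) + (\<omega> - q) * U $$ (i, k)) * (A $$ (k, j) + \<omega> * B $$ (k, j)))"
    using U V A B i j by (simp add: scalar_prod_def)
  also have "\<dots> = (\<Sum>k=0..<d. ?F k + (\<omega> - q) * ?G k)"
    unfolding split_mult ..
  also have "\<dots> = (\<Sum>k=0..<d. ?F k) + (\<omega> - q) * (\<Sum>k=0..<d. ?G k)"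
    by (subst sum.distrib) (simp only: sum_distrib_left)
  also have "(\<Sum>k=0..<d. ?G k) = (U * A + V * B) $$ (i, j)"
    using U V A B i j by (simp add: scalar_prod_def sum.distrib)
  also have "\<dots> = 0" using UV_ker i j by simp
  also have "(\<Sum>k=0..<d. ?F k) = (V * A) $$ (i, j) + q * (V * B) $$ (i, j) + p * (U * B) $$ (i, j)"
    using U V A B i j by (simp add: scalar_prod_def sum.distrib sum_distrib_left)
  finally show ?thesis by simp
qed

lemma index_quad_combination:
  fixes U V :: "'a::comm_ring mat"
  shows "U \<in> carrier_mat h d \<Longrightarrow> V \<in> carrier_mat h d \<Longrightarrow> i < h \<Longrightarrow> k < d \<Longrightarrow>
    (V + (\<omega> - q) \<cdot>\<^sub>m U) $$ (i, k) = (V $$ (i, k) - q * U $$ (i, k)) + U $$ (i, k) * \<omega>"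
  by (simp add: algebra_simps)

lemma rows_indpt_over_quad_combination_mult:
  fixes U V M :: "'a::field mat"
  assumes K: "is_subfield K" and w: "\<omega> \<notin> K" and q: "q \<in> K"
    and U: "U \<in> carrier_mat h d" and V: "V \<in> carrier_mat h d" and UK: "mat_over K U" and VK: "mat_over K V"
    and M: "M \<in> carrier_mat d n" and M_indpt: "rows_indpt_over UNIV M"
    and UV_indpt: "\<And>c. (\<And>i. i < h \<Longrightarrow> c i \<in> K) \<Longrightarrow> (\<And>k. k < d \<Longrightarrow> row_comb c U k = 0) \<Longrightarrow>
      (\<And>k. k < d \<Longrightarrow> row_comb c V k = 0) \<Longrightarrow> \<forall>i<h. c i = 0"
  shows "rows_indpt_over K ((V + (\<omega> - q) \<cdot>\<^sub>m U) * M)"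
  unfolding rows_indpt_over_def
proof (intro allI impI)
  define Q where "Q = V + (\<omega> - q) \<cdot>\<^sub>m U"
  have Q: "Q \<in> carrier_mat h d" unfolding Q_def using U V by auto
  fix e i assume eK: "\<forall>i<dim_row ((V + (\<omega> - q) \<cdot>\<^sub>m U) * M). e i \<in> K"
    and ker: "\<forall>j<dim_col ((V + (\<omega> - q) \<cdot>\<^sub>m U) * M). row_comb e ((V + (\<omega> - q) \<cdot>\<^sub>m U) * M) j = 0"
    and i: "i < dim_row ((V + (\<omega> - q) \<cdot>\<^sub>m U) * M)"
  have eQ: "row_comb e Q k = 0" if "k < d" for k
  proof (rule rows_indpt_overD[OF M_indpt])
    show "row_comb (row_comb e Q) M j = 0" if "j < dim_col M" for j
      using ker row_comb_mult[OF Q M, of j e] that Q M unfolding Q_def by simp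
  qed (use that M in simp_all)
  have "row_comb e U k = 0 \<and> row_comb e V k = 0" if k: "k < d" for k
  proof -
    have dims: "dim_row Q = h" "dim_row U = h" "dim_row V = h" using Q U V by auto
    have Q_index: "Q $$ (i, k) = (V $$ (i, k) - q * U $$ (i, k)) + U $$ (i, k) * \<omega>" if "i < h" for i
      using index_quad_combination[OF U V that k] unfolding Q_def .
    have "row_comb e Q k = (\<Sum>i=0..<h. (e i * V $$ (i, k) - q * (e i * U $$ (i, k))) + e i * U $$ (i, k) * \<omega>)"
      unfolding row_comb_def dims by (intro sum.cong refl) (simp add: Q_index algebra_simps)
    also have "\<dots> = (row_comb e V k - q * row_comb e U k) + row_comb e U k * \<omega>"
      by (simp only: row_comb_def dims sum.distrib sum_subtractf sum_distrib_left sum_distrib_right)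
    finally have split: "(row_comb e V k - q * row_comb e U k) + row_comb e U k * \<omega> = 0"
      using eQ[OF k] by simp
    have U_K: "row_comb e U k \<in> K" and V_K: "row_comb e V k \<in> K"
      using row_comb_in_subfield[OF K UK] row_comb_in_subfield[OF K VK] eK k U V M by auto
    then have "row_comb e V k - q * row_comb e U k \<in> K"
      using q subfield_diff[OF K] subfield_mult[OF K] by simp
    from subfield_coords_eq_0[OF K w this U_K split] show ?thesis by simp
  qed
  then show "e i = 0" using UV_indpt[of e] eK i U M by auto
qed

lemma full_rank_quad_combination_over_subfield:
  fixes A B U V :: "'a::field mat"
  assumes K: "is_subfield K" and w: "\<omega> \<notin> K" and p: "p \<in> K" and q: "q \<in> K"
    and w_sq: "\<omega>^2 = p + q * \<omega>"
    and A: "A \<in> carrier_mat d n" and B: "B \<in> carrier_mat d n" and AK: "mat_over K A" and BK: "mat_over K B"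
    and rank: "vec_space.rank d (A + \<omega> \<cdot>\<^sub>m B) = d"
    and U: "U \<in> carrier_mat h d" and V: "V \<in> carrier_mat h d" and UK: "mat_over K U" and VK: "mat_over K V"
    and UV_ker: "U * A + V * B = 0\<^sub>m h n"
    and UV_indpt: "\<And>c. (\<And>i. i < h \<Longrightarrow> c i \<in> K) \<Longrightarrow> (\<And>k. k < d \<Longrightarrow> row_comb c U k = 0) \<Longrightarrow>
      (\<And>k. k < d \<Longrightarrow> row_comb c V k = 0) \<Longrightarrow> \<forall>i<h. c i = 0"
  defines "Q \<equiv> V + (\<omega> - q) \<cdot>\<^sub>m U"
  shows "mat_over (quad_ext K \<omega>) Q" and "vec_space.rank h Q = h" and "mat_over K (Q * (A + \<omega> \<cdot>\<^sub>m B))"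
proof -
  note sf = subfield_add[OF K] subfield_mult[OF K] subfield_diff[OF K]
  define M where "M = A + \<omega> \<cdot>\<^sub>m B"
  have M: "M \<in> carrier_mat d n" and Q: "Q \<in> carrier_mat h d"
    unfolding M_def Q_def using A B U V by auto
  show QK: "mat_over (quad_ext K \<omega>) Q"
    unfolding mat_over_def
  proof (intro allI impI)
    fix i k assume "i < dim_row Q" "k < dim_col Q"
    then have i: "i < h" and k: "k < d" using Q by auto
    have "V $$ (i, k) - q * U $$ (i, k) \<in> K" "U $$ (i, k) \<in> K"
      using UK VK U V q sf i k unfolding mat_over_def by auto
    then show "Q $$ (i, k) \<in> quad_ext K \<omega>"
      unfolding Q_def index_quad_combination[OF U V i k] by (rule quad_ext_memI)
  qed
  show QMK: "mat_over K (Q * (A + \<omega> \<cdot>\<^sub>m B))"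
    using index_quad_combination_mult[OF w_sq A B U V UV_ker] mat_over_mult[OF K V A VK AK]
      mat_over_mult[OF K V B VK BK] mat_over_mult[OF K U B UK BK] U V A B Q M p q sf
    unfolding mat_over_def Q_def M_def by auto
  have "rows_indpt_over K (Q * M)"
    using rows_indpt_over_quad_combination_mult[OF K w q U V UK VK M
        rows_indpt_if_rank_eq_dim_row[OF M rank[folded M_def]] UV_indpt]
    unfolding Q_def .
  then have "rows_indpt_over (quad_ext K \<omega>) Q"
    using rows_indpt_over_mult_right[OF Q M] rows_indpt_over_quad_ext[OF K w QMK[folded M_def]] by blast
  moreover have "is_subfield (quad_ext K \<omega>)"
    using is_subfield_quad_ext[OF K] w p q w_sq unfolding degree2_generator_def by blast
  ultimately show "vec_space.rank h Q = h"
    using rank_eq_dim_row_if_rows_indpt_over[OF _ Q QK] by blast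
qed

theorem lemma3p3:
  fixes F0 :: "'a::field set" and \<omega> :: 'a and h d n :: nat
    and A B :: "'a mat"
  assumes "is_subfield F0"
    and "degree2_generator F0 \<omega>"
    and "h \<le> d"
    and "A \<in> carrier_mat d n" and "B \<in> carrier_mat d n"
    and "mat_over F0 A" and "mat_over F0 B"
    and "vec_space.rank d (A + \<omega> \<cdot>\<^sub>m B) = d"
    and "vec_space.rank (2 * d) (A @\<^sub>r B) = 2 * d - h"
  shows "\<exists>Q. Q \<in> carrier_mat h d \<and> mat_over (quad_ext F0 \<omega>) Q \<and>
             vec_space.rank h Q = h \<and> mat_over F0 (Q * (A + \<omega> \<cdot>\<^sub>m B))"
proof -
  note K = assms(1) and A = assms(4) and B = assms(5)
  from assms(2) obtain p q where w: "\<omega> \<notin> F0" and pq: "p \<in> F0" "q \<in> F0" and w_sq: "\<omega>^2 = p + q * \<omega>"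
    unfolding degree2_generator_def by auto
  have AB: "A @\<^sub>r B \<in> carrier_mat (d + d) n" using A B by simp
  have "vec_space.rank (d + d) (A @\<^sub>r B) + h \<le> d + d" using assms(3,9) by (simp add: mult_2)
  then obtain R where R: "R \<in> carrier_mat h (d + d)" and RK: "mat_over F0 R"
    and R_ker: "R * (A @\<^sub>r B) = 0\<^sub>m h n" and R_indpt: "rows_indpt_over UNIV R"
    using low_rank_left_annihilator[OF K AB mat_over_append_rows[OF A B assms(6,7)]] by blast
  define U where "U = mat h d (\<lambda>(i, k). R $$ (i, k))"
  define V where "V = mat h d (\<lambda>(i, k). R $$ (i, d + k))"
  have UV: "U \<in> carrier_mat h d" "V \<in> carrier_mat h d" "mat_over F0 U" "mat_over F0 V"
    using RK R unfolding U_def V_def mat_over_def by auto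
  have UV_ker: "U * A + V * B = 0\<^sub>m h n"
    using left_annihilator_append_rows(1)[OF R A B R_ker] unfolding U_def V_def .
  have UV_indpt: "\<forall>i<h. c i = 0"
    if "\<And>k. k < d \<Longrightarrow> row_comb c U k = 0" "\<And>k. k < d \<Longrightarrow> row_comb c V k = 0" for c
    using rows_indpt_overD[OF R_indpt, of c] left_annihilator_append_rows(2)[OF R A B R_ker, of _ c] that R
    unfolding U_def V_def by (force simp: not_less)
  note Q = full_rank_quad_combination_over_subfield[OF K w pq w_sq A B assms(6,7,8) UV UV_ker UV_indpt]
  show ?thesis
    using Q UV(1,2) by (intro exI[of _ "V + (\<omega> - q) \<cdot>\<^sub>m U"]) auto
qed

end
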